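(* Almost all partial sums $s_n=\sum_{r=0}^{n}1/r!$ of the Taylor series for $e$ are not convergents of the simple continued fraction expansion of $e$; that is, the set of $n\ge 0$ for which $s_n$ is a convergent of $e$ has natural density zero.
   Context: The convergents of $e$ are the rationals obtained by truncating the simple continued fraction expansion of $e$. *)

theory Defs
  imports Complex_Main
begin

fun cf_rem :: "real \<Rightarrow> nat \<Rightarrow> real" where
  "cf_rem x 0 = x"
| "cf_rem x (Suc k) = 1 / frac (cf_rem x k)"

definition cf_coeff :: "real \<Rightarrow> nat \<Rightarrow> int" where
  "cf_coeff x k = \<lfloor>cf_rem x k\<rfloor>"

text \<open>Value of the finite continued fraction [a_m; a_(m+1), ..., a_(m+n)].\<close>

fun eval_cf :: "(nat \<Rightarrow> int) \<Rightarrow> nat \<Rightarrow> nat \<Rightarrow> real" where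
  "eval_cf a m 0 = of_int (a m)"
| "eval_cf a m (Suc n) = of_int (a m) + 1 / eval_cf a (Suc m) n"

definition cf_convergent :: "real \<Rightarrow> nat \<Rightarrow> real" where
  "cf_convergent x n = eval_cf (cf_coeff x) 0 n"

end

theory Submission
  imports Defs
begin

text \<open>
  Write the partial sum as s_n = A_n / n! and let G_n = gcd(A_n, n!), so that s_n has reduced
  denominator n! / G_n. Every convergent p/q of the irrational number e satisfies
  |e - p/q| < 1/q^2, whereas e - s_n > 1/(n+1)!; hence if s_n is a convergent then
  G_n^2 > n!/(n+1), i.e. G_n is almost as large as the square root of n!.
  On the other hand A_j is congruent modulo A_i to a number of size at most (j+1)^(j-i), so the
  G_n for nearby indices are nearly coprime. Three such indices a < b < c in a short window
  would give three nearly coprime divisors of c! with product about (a!)^(3/2), which is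
  impossible. So each window of length L beyond 33L + 13 contains at most two such n, and the
  density is at most 2/L for every L.
\<close>

section \<open>Convergents of an irrational number\<close>

text \<open>\<open>cf_continuants a m n = (p, q)\<close> gives numerator and denominator of the finite continued
  fraction [a_m; ..., a_(m+n-1)] with n partial quotients; for n = 0 it is the formal 1/0.\<close>

fun cf_continuants :: "(nat \<Rightarrow> int) \<Rightarrow> nat \<Rightarrow> nat \<Rightarrow> int \<times> int" where
  "cf_continuants a m 0 = (1, 0)"
| "cf_continuants a m (Suc n) =
     (a m * fst (cf_continuants a (Suc m) n) + snd (cf_continuants a (Suc m) n),
      fst (cf_continuants a (Suc m) n))"

lemma cf_continuants_pos:
  assumes "\<And>k. m \<le> k \<Longrightarrow> 1 \<le> a k"
  shows "1 \<le> fst (cf_continuants a m n) \<and> 0 \<le> snd (cf_continuants a m n)"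
  using assms
proof (induction n arbitrary: m)
  case 0
  then show ?case by simp
next
  case (Suc n)
  have "1 \<le> a m" by (rule Suc.prems) simp
  moreover have "1 \<le> fst (cf_continuants a (Suc m) n) \<and> 0 \<le> snd (cf_continuants a (Suc m) n)"
    using Suc by simp
  ultimately show ?case using mult_mono[of 1 "a m" 1 "fst (cf_continuants a (Suc m) n)"] by simp
qed

lemma cf_continuants_det:
  "fst (cf_continuants a m (Suc n)) * snd (cf_continuants a m n)
     - fst (cf_continuants a m n) * snd (cf_continuants a m (Suc n)) = (-1) ^ Suc n"
proof (induction n arbitrary: m)
  case 0
  then show ?case by simp
next
  case (Suc n)
  from Suc.IH[of "Suc m"] show ?case by (simp add: algebra_simps)
qed

lemma eval_cf_eq_continuants:
  assumes "\<And>k. m < k \<Longrightarrow> 1 \<le> a k"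
  shows "eval_cf a m n = fst (cf_continuants a m (Suc n)) / snd (cf_continuants a m (Suc n))"
  using assms
proof (induction n arbitrary: m)
  case 0
  then show ?case by simp
next
  case (Suc n)
  define p where "p = fst (cf_continuants a (Suc m) (Suc n))"
  define q where "q = snd (cf_continuants a (Suc m) (Suc n))"
  have "1 \<le> p"
    unfolding p_def by (rule conjunct1[OF cf_continuants_pos]) (simp add: Suc.prems Suc_le_eq)
  then have "a m + 1 / (p / q) = (a m * p + q) / p"
    by (simp add: field_simps)
  moreover have "eval_cf a m (Suc n) = a m + 1 / (p / q)"
    unfolding p_def q_def using Suc by simp
  moreover have "cf_continuants a m (Suc (Suc n)) = (a m * p + q, p)"
    unfolding p_def q_def by simp
  ultimately show ?case by (simp del: cf_continuants.simps)
qed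

declare cf_rem.simps(2) [simp del]

lemma cf_rem_eq_coeff_plus: "cf_rem x k = cf_coeff x k + 1 / cf_rem x (Suc k)"
  by (simp add: cf_rem.simps(2) cf_coeff_def frac_def)

lemma cf_rem_not_Rats:
  assumes "x \<notin> \<rat>"
  shows "cf_rem x k \<notin> \<rat>"
proof (induction k)
  case 0
  then show ?case using assms by simp
next
  case (Suc k)
  then show ?case
    using cf_rem_eq_coeff_plus[of x k] by (metis Rats_add Rats_divide Rats_of_int Rats_1)
qed

lemma cf_rem_Suc_gt_1:
  assumes "x \<notin> \<rat>"
  shows "1 < cf_rem x (Suc k)"
proof -
  have "cf_rem x k \<notin> \<int>" using cf_rem_not_Rats[OF assms] Ints_subset_Rats by blast
  then have "0 < frac (cf_rem x k)" by (simp add: order_less_le)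
  with frac_lt_1 show ?thesis by (simp add: cf_rem.simps(2))
qed

lemma cf_coeff_pos:
  assumes "x \<notin> \<rat>" "0 < k"
  shows "1 \<le> cf_coeff x k"
  using assms cf_rem_Suc_gt_1[OF assms(1), of "k - 1"]
  by (simp add: cf_coeff_def le_floor_iff)

lemma cf_rem_eq_continuants:
  assumes "x \<notin> \<rat>"
  shows "cf_rem x m =
    (fst (cf_continuants (cf_coeff x) m (Suc n)) * cf_rem x (m + Suc n)
       + fst (cf_continuants (cf_coeff x) m n))
    / (snd (cf_continuants (cf_coeff x) m (Suc n)) * cf_rem x (m + Suc n)
       + snd (cf_continuants (cf_coeff x) m n))"
proof (induction n arbitrary: m)
  case 0
  have "0 < cf_rem x (Suc m)" using cf_rem_Suc_gt_1[OF assms] by (rule less_trans[OF zero_less_one])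
  then show ?case using cf_rem_eq_coeff_plus[of x m] by (simp add: field_simps)
next
  case (Suc n)
  define t where "t = cf_rem x (m + Suc (Suc n))"
  define K where "K = cf_continuants (cf_coeff x) (Suc m)"
  have pos: "1 \<le> fst (K k)" for k
    unfolding K_def by (rule conjunct1[OF cf_continuants_pos]) (simp add: cf_coeff_pos assms)
  have "1 < t" unfolding t_def using cf_rem_Suc_gt_1[OF assms] by simp
  then have "0 < fst (K (Suc n)) * t + fst (K n)"
    using pos[of "Suc n"] pos[of n] by (intro add_pos_pos mult_pos_pos) auto
  moreover have "cf_rem x (Suc m) = (fst (K (Suc n)) * t + fst (K n)) / (snd (K (Suc n)) * t + snd (K n))"
    using Suc.IH[of "Suc m"] unfolding t_def K_def by simp
  moreover have "cf_continuants (cf_coeff x) m (Suc (Suc n))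
      = (cf_coeff x m * fst (K (Suc n)) + snd (K (Suc n)), fst (K (Suc n)))"
    "cf_continuants (cf_coeff x) m (Suc n) = (cf_coeff x m * fst (K n) + snd (K n), fst (K n))"
    unfolding K_def by simp_all
  ultimately show ?case
    using cf_rem_eq_coeff_plus[of x m] unfolding t_def[symmetric]
    by (simp add: field_simps del: cf_continuants.simps)
qed

theorem cf_convergent_approx:
  assumes "x \<notin> \<rat>"
  obtains p q :: int where "1 \<le> q" "cf_convergent x n = p / q" "\<bar>x - p / q\<bar> < 1 / q\<^sup>2"
proof -
  define K where "K = cf_continuants (cf_coeff x) 0"
  define p where "p = fst (K (Suc n))"
  define q where "q = snd (K (Suc n))"
  define p' where "p' = fst (K n)"
  define q' where "q' = snd (K n)"
  define t where "t = cf_rem x (Suc n)"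
  have coeff_pos: "\<And>k. 0 < k \<Longrightarrow> 1 \<le> cf_coeff x k" using cf_coeff_pos[OF assms] .
  have pos1: "1 \<le> fst (cf_continuants (cf_coeff x) (Suc 0) k)" for k
    by (rule conjunct1[OF cf_continuants_pos]) (simp add: coeff_pos)
  have q: "1 \<le> q" "0 \<le> q'"
  proof -
    show "1 \<le> q" using pos1 by (simp add: q_def K_def)
    show "0 \<le> q'"
    proof (cases n)
      case (Suc n')
      then show ?thesis using pos1[of n'] by (simp add: q'_def K_def)
    qed (simp add: q'_def K_def)
  qed
  have "1 < t" unfolding t_def by (rule cf_rem_Suc_gt_1[OF assms])
  then have "q < q * t" using q by simp
  then have denom: "q < q * t + q'" using q by linarith
  have "x = (p * t + p') / (q * t + q')"
    using cf_rem_eq_continuants[OF assms, of 0 n] unfolding p_def q_def p'_def q'_def K_def t_def by simp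
  then have "x - p / q = of_int (q * p' - p * q') / (q * (q * t + q'))"
    using q denom by (simp add: diff_frac_eq algebra_simps)
  moreover have "p * q' - p' * q = (-1) ^ Suc n"
    unfolding p_def q_def p'_def q'_def K_def by (rule cf_continuants_det)
  then have "q * p' - p * q' = - ((-1) ^ Suc n)" by (metis minus_diff_eq mult.commute)
  then have "\<bar>real_of_int (q * p' - p * q')\<bar> = 1"
    by (simp only: of_int_abs[symmetric] abs_minus_cancel power_abs abs_neg_one abs_one power_one of_int_1)
  ultimately have "\<bar>x - p / q\<bar> = 1 / (q * (q * t + q'))"
    using q denom by (simp only: abs_divide) (simp add: abs_mult)
  also have "\<dots> < 1 / q\<^sup>2"
    using q denom by (simp add: power2_eq_square divide_strict_left_mono mult_strict_left_mono)
  finally have "\<bar>x - p / q\<bar> < 1 / q\<^sup>2" .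
  moreover have "cf_convergent x n = p / q"
    unfolding cf_convergent_def p_def q_def K_def by (rule eval_cf_eq_continuants) (simp add: coeff_pos)
  ultimately show ?thesis using that q by blast
qed

section \<open>The partial sums of e\<close>

lemma fact_add_le_mult_power: "fact (m + d) \<le> (fact m :: nat) * (m + d) ^ d"
proof (induction d)
  case 0
  then show ?case by simp
next
  case (Suc d)
  have "fact (m + Suc d) = (m + Suc d) * (fact (m + d) :: nat)" by simp
  also have "\<dots> \<le> (m + Suc d) * (fact m * (m + d) ^ d)" using Suc by (rule mult_le_mono2)
  also have "\<dots> \<le> (m + Suc d) * (fact m * (m + Suc d) ^ d)"
    by (intro mult_le_mono2 power_mono) auto
  finally show ?case by (simp add: algebra_simps)
qed

lemma power_mult_fact_le_fact_add: "(m + 1) ^ d * fact m \<le> (fact (m + d) :: nat)"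
proof (induction d)
  case 0
  then show ?case by simp
next
  case (Suc d)
  have "(m + 1) ^ Suc d * fact m = (m + 1) * ((m + 1) ^ d * fact m)"
    by (simp only: power_Suc mult.assoc)
  also have "\<dots> \<le> (m + Suc d) * fact (m + d)" using Suc by (intro mult_le_mono) auto
  also have "\<dots> = fact (m + Suc d)" by simp
  finally show ?case .
qed

lemma exp1_sums: "(\<lambda>n. 1 / fact n :: real) sums exp 1"
  using exp_converges[of "1::real"] by (simp add: divide_inverse)

lemma exp1_minus_partial_sum: "exp 1 - (\<Sum>r\<le>n. 1 / fact r :: real) = (\<Sum>j. 1 / fact (j + Suc n))"
  using sums_unique[OF sums_split_initial_segment[OF exp1_sums, of "Suc n"]]
  by (simp add: lessThan_Suc_atMost)

lemma summable_inverse_fact_shift: "summable (\<lambda>j. 1 / fact (j + k) :: real)"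
  using summable_iff_shift[of "\<lambda>n. 1 / fact n :: real" k] sums_summable[OF exp1_sums] by simp

lemma exp1_minus_partial_sum_gt: "1 / fact (Suc n) < exp 1 - (\<Sum>r\<le>n. 1 / fact r :: real)"
proof -
  have "(\<Sum>j<2. 1 / fact (j + Suc n) :: real) \<le> (\<Sum>j. 1 / fact (j + Suc n))"
    by (rule sum_le_suminf[OF summable_inverse_fact_shift]) auto
  moreover have "(\<Sum>j<2. 1 / fact (j + Suc n) :: real) = 1 / fact (Suc n) + 1 / fact (Suc (Suc n))"
    by (simp add: numeral_2_eq_2)
  moreover have "0 < (1 / fact (Suc (Suc n)) :: real)" by simp
  ultimately show ?thesis using exp1_minus_partial_sum[of n] by linarith
qed

lemma exp1_minus_partial_sum_le: "exp 1 - (\<Sum>r\<le>n. 1 / fact r :: real) \<le> 2 / fact (Suc n)"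
proof -
  have "1 / fact (j + Suc n) \<le> 1 / fact (Suc n) * (1 / 2 :: real) ^ j" for j
  proof -
    have "fact (Suc n) * 2 ^ j \<le> fact (Suc n) * (Suc n + 1) ^ j"
      by (intro mult_le_mono2 power_mono) auto
    also have "\<dots> \<le> fact (j + Suc n)"
      using power_mult_fact_le_fact_add[of "Suc n" j] by (simp add: mult.commute add.commute)
    finally have "real (fact (Suc n) * 2 ^ j) \<le> real (fact (j + Suc n))"
      by (simp only: of_nat_le_iff)
    then have "fact (Suc n) * 2 ^ j \<le> (fact (j + Suc n) :: real)"
      by (simp only: of_nat_mult of_nat_fact of_nat_power of_nat_numeral)
    then show ?thesis by (simp add: power_divide divide_simps)
  qed
  then have "(\<Sum>j. 1 / fact (j + Suc n) :: real) \<le> (\<Sum>j. 1 / fact (Suc n) * (1 / 2) ^ j)"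
    by (intro suminf_le summable_inverse_fact_shift summable_mult summable_geometric) auto
  also have "\<dots> = 1 / fact (Suc n) * (\<Sum>j. (1 / 2) ^ j)"
    by (rule suminf_mult[OF summable_geometric]) simp
  also have "\<dots> = 2 / fact (Suc n)"
    using suminf_geometric[of "1 / 2 :: real"] by simp
  finally show ?thesis using exp1_minus_partial_sum[of n] by simp
qed

fun e_numer :: "nat \<Rightarrow> nat" where
  "e_numer 0 = 1"
| "e_numer (Suc n) = Suc n * e_numer n + 1"

lemma partial_sum_exp1_eq: "(\<Sum>r\<le>n. 1 / fact r :: real) = e_numer n / fact n"
proof (induction n)
  case 0
  then show ?case by simp
next
  case (Suc n)
  have "real (Suc n * e_numer n + 1) / fact (Suc n)
      = (real (Suc n) * e_numer n + 1) / (real (Suc n) * fact n)"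
    by (simp only: fact_Suc of_nat_add of_nat_mult of_nat_1)
  also have "\<dots> = e_numer n / fact n + 1 / fact (Suc n)"
    by (simp add: add_divide_distrib)
  finally show ?case using Suc by simp
qed

lemma exp1_not_Rats: "exp (1 :: real) \<notin> \<rat>"
proof
  assume "exp (1 :: real) \<in> \<rat>"
  then obtain p q :: int where q: "0 < q" and pq: "exp 1 = p / q"
    by (auto elim: Rats_cases')
  define n where "n = nat (2 * q)"
  define z where "z = q * fact n * (exp 1 - (\<Sum>r\<le>n. 1 / fact r :: real))"
  have "z = of_int (p * fact n - q * e_numer n)"
    unfolding z_def pq partial_sum_exp1_eq using q by (simp add: field_simps)
  then obtain k where z: "z = of_int k" by blast
  have "0 < exp 1 - (\<Sum>r\<le>n. 1 / fact r :: real)"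
    by (rule order_less_trans[OF _ exp1_minus_partial_sum_gt]) simp
  then have "0 < z" unfolding z_def using q by simp
  moreover have "z \<le> q * fact n * (2 / fact (Suc n))"
    unfolding z_def using q exp1_minus_partial_sum_le[of n] by (intro mult_left_mono) auto
  moreover have "q * fact n * (2 / fact (Suc n)) = 2 * q / (Suc n :: real)"
    by (simp add: field_simps del: of_nat_Suc)
  moreover have "2 * q / (Suc n :: real) < 1" unfolding n_def using q by (simp add: field_simps)
  ultimately have "0 < real_of_int k" "real_of_int k < 1" unfolding z by linarith+
  then show False by simp
qed

lemma reduced_denominator_le:
  fixes a b :: nat and p q :: int
  assumes "0 < b" "0 < q" "real a / real b = p / q"
  shows "b div gcd a b \<le> q"
proof -
  define g where "g = gcd a b"
  obtain a' b' where ab: "a = a' * g" "b = b' * g" and "coprime a' b'"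
    using gcd_coprime_exists[of a b] assms(1) unfolding g_def by auto
  have g: "0 < g" and b': "0 < b'" using assms(1) ab(2) unfolding g_def by (auto intro: Nat.gr0I)
  have "real a / real b = real a' / real b'"
    using g unfolding ab by simp
  then have "real a' * q = p * real b'"
    using assms b' by (simp add: field_simps)
  then have "int a' * q = p * int b'" by (metis of_int_eq_iff of_int_mult of_int_of_nat_eq)
  then have "int b' dvd int a' * q" by simp
  with \<open>coprime a' b'\<close> have "int b' dvd q"
    by (simp add: coprime_commute coprime_dvd_mult_right_iff)
  then have "int b' \<le> q" using assms(2) by (simp add: zdvd_imp_le)
  moreover have "b div g = b'" using ab(2) g by simp
  ultimately show ?thesis unfolding g_def by simp
qed

definition e_gcd :: "nat \<Rightarrow> nat" where
  "e_gcd n = gcd (e_numer n) (fact n)"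

lemma partial_sum_convergent_imp_fact_less:
  assumes "(\<Sum>r\<le>n. 1 / fact r :: real) \<in> range (cf_convergent (exp 1))"
  shows "fact n < Suc n * e_gcd n ^ 2"
proof -
  define f where "f = fact n div e_gcd n"
  have fact_n: "fact n = f * e_gcd n" unfolding f_def e_gcd_def by simp
  then have f: "0 < f" by (metis fact_gt_zero mult_is_0 neq0_conv)
  obtain k where k: "(\<Sum>r\<le>n. 1 / fact r :: real) = cf_convergent (exp 1) k"
    using assms by blast
  obtain p q :: int where q: "1 \<le> q" and conv: "cf_convergent (exp 1) k = p / q"
    and approx: "\<bar>exp 1 - p / q\<bar> < 1 / q\<^sup>2"
    using cf_convergent_approx[OF exp1_not_Rats] by blast
  have "f \<le> q"
    unfolding f_def e_gcd_def
    by (rule reduced_denominator_le) (use k conv q partial_sum_exp1_eq[of n] in auto)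
  have "1 / fact (Suc n) < exp 1 - (\<Sum>r\<le>n. 1 / fact r :: real)"
    by (rule exp1_minus_partial_sum_gt)
  also have "\<dots> \<le> \<bar>exp 1 - p / q\<bar>" using k conv by simp
  also have "\<dots> < 1 / q\<^sup>2" by (rule approx)
  also have "\<dots> \<le> 1 / (real f)\<^sup>2"
    using \<open>f \<le> q\<close> f by (intro divide_left_mono power_mono) auto
  finally have "inverse (fact (Suc n)) < inverse ((real f)\<^sup>2)"
    by (simp only: inverse_eq_divide)
  then have "(real f)\<^sup>2 < fact (Suc n)"
    using f by (subst (asm) inverse_less_iff_less) auto
  then have "f ^ 2 < fact (Suc n)"
    by (metis of_nat_fact of_nat_less_iff of_nat_power)
  also have "fact (Suc n) = f * (Suc n * e_gcd n)"
    using fact_n by (simp add: algebra_simps)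
  finally have "f < Suc n * e_gcd n"
    by (simp add: power2_eq_square)
  moreover have "0 < e_gcd n" using fact_n by (metis fact_gt_zero mult_is_0 neq0_conv)
  ultimately have "f * e_gcd n < Suc n * e_gcd n * e_gcd n" by (rule mult_strict_right_mono)
  then show ?thesis using fact_n by (simp only: power2_eq_square mult.assoc)
qed

section \<open>Nearby indices have nearly coprime gcds\<close>

text \<open>\<open>e_numer_tail m d\<close> is the sum of (m+d)!/r! over m < r \<le> m+d, the part of
  \<open>e_numer (m + d)\<close> not divisible by \<open>e_numer m\<close>.\<close>

fun e_numer_tail :: "nat \<Rightarrow> nat \<Rightarrow> nat" where
  "e_numer_tail m 0 = 0"
| "e_numer_tail m (Suc d) = (m + Suc d) * e_numer_tail m d + 1"

lemma e_numer_add: "\<exists>F. e_numer (m + d) = F * e_numer m + e_numer_tail m d"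
proof (induction d)
  case 0
  then show ?case by (intro exI[of _ 1]) simp
next
  case (Suc d)
  then obtain F where "e_numer (m + d) = F * e_numer m + e_numer_tail m d" by blast
  then show ?case by (intro exI[of _ "(m + Suc d) * F"]) (simp add: algebra_simps)
qed

lemma e_numer_tail_le: "e_numer_tail m d \<le> (m + d + 1) ^ d"
proof (induction d)
  case 0
  then show ?case by simp
next
  case (Suc d)
  have "(m + Suc d) * e_numer_tail m d \<le> (m + d + 1) * (m + d + 1) ^ d"
    using mult_le_mono2[OF Suc.IH, of "m + Suc d"] by simp
  then have "e_numer_tail m (Suc d) \<le> (m + d + 1) * (m + d + 1) ^ d + 1"
    by simp
  also have "\<dots> \<le> (m + d + 2) * (m + d + 1) ^ d"
    by (simp add: algebra_simps)
  also have "\<dots> \<le> (m + d + 2) * (m + d + 2) ^ d"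
    by (intro mult_le_mono2 power_mono) simp_all
  also have "\<dots> = (m + Suc d + 1) ^ Suc d"
    by simp
  finally show ?case .
qed

lemma gcd_e_gcd_le:
  assumes "i < j"
  shows "gcd (e_gcd i) (e_gcd j) \<le> (j + 1) ^ (j - i)"
proof -
  obtain d where j: "j = i + d" and "0 < d" using assms less_imp_add_positive by blast
  obtain F where F: "e_numer j = F * e_numer i + e_numer_tail i d"
    using e_numer_add j by blast
  have "gcd (e_gcd i) (e_gcd j) dvd gcd (e_numer i) (e_numer j)"
    unfolding e_gcd_def by (intro gcd_mono) simp_all
  also have "gcd (e_numer i) (e_numer j) dvd e_numer_tail i d"
    using F by (metis dvd_add_right_iff dvd_mult gcd_dvd1 gcd_dvd2)
  finally have "gcd (e_gcd i) (e_gcd j) \<le> e_numer_tail i d"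
    using \<open>0 < d\<close> by (intro dvd_imp_le) (auto simp: gr0_conv_Suc)
  also have "\<dots> \<le> (j + 1) ^ (j - i)"
    using e_numer_tail_le[of i d] j by simp
  finally show ?thesis .
qed

lemma mult3_le_mult_gcds:
  fixes x y z D :: nat
  assumes "x dvd D" "y dvd D" "z dvd D" "0 < D"
  shows "x * y * z \<le> D * (gcd x y * gcd x z * gcd y z)"
proof -
  have "lcm x (lcm y z) \<le> D" using assms by (intro dvd_imp_le) auto
  moreover have "gcd x (lcm y z) \<le> gcd x y * gcd x z"
  proof (rule dvd_imp_le)
    have "gcd x (lcm y z) dvd gcd x (y * z)"
      by (intro gcd_mono) (simp_all add: lcm_least)
    also have "\<dots> dvd gcd x y * gcd x z"
      by (simp add: gcd_mult_distrib_nat mult.commute)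
    finally show "gcd x (lcm y z) dvd gcd x y * gcd x z" .
    show "0 < gcd x y * gcd x z" using assms by (auto intro: Nat.gr0I)
  qed
  ultimately have "lcm x (lcm y z) * gcd x (lcm y z) * gcd y z \<le> D * (gcd x y * gcd x z) * gcd y z"
    by (intro mult_right_mono mult_mono) auto
  moreover have "x * y * z = lcm x (lcm y z) * gcd x (lcm y z) * gcd y z"
    using lcm_mult_gcd[of x "lcm y z"] lcm_mult_gcd[of y z] by (simp add: mult.assoc)
  ultimately show ?thesis by (simp add: mult.assoc)
qed

lemma gcd_e_gcd_le_power:
  assumes "i < j" "j \<le> c" "j - i \<le> L"
  shows "gcd (e_gcd i) (e_gcd j) \<le> (c + 1) ^ L"
proof -
  have "gcd (e_gcd i) (e_gcd j) \<le> (j + 1) ^ (j - i)" by (rule gcd_e_gcd_le[OF assms(1)])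
  also have "\<dots> \<le> (c + 1) ^ L"
    using assms by (intro order.trans[OF power_mono power_increasing]) auto
  finally show ?thesis .
qed

lemma e_gcd_prod_le:
  assumes "a < b" "b < c" "c < a + L"
  shows "e_gcd a * e_gcd b * e_gcd c \<le> fact c * (c + 1) ^ (3 * L)"
proof -
  have "e_gcd k dvd fact c" if "k \<le> c" for k
    unfolding e_gcd_def using that by (meson dvd_trans fact_dvd gcd_dvd2)
  then have "e_gcd a * e_gcd b * e_gcd c
      \<le> fact c * (gcd (e_gcd a) (e_gcd b) * gcd (e_gcd a) (e_gcd c) * gcd (e_gcd b) (e_gcd c))"
    using assms by (intro mult3_le_mult_gcds) auto
  also have "\<dots> \<le> fact c * ((c + 1) ^ L * (c + 1) ^ L * (c + 1) ^ L)"
    using assms by (intro mult_le_mono2 mult_le_mono gcd_e_gcd_le_power) auto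
  also have "\<dots> = fact c * (c + 1) ^ (3 * L)"
    by (simp flip: power_add add: numeral_3_eq_3 add.assoc)
  finally show ?thesis .
qed

lemma power_le_fact:
  assumes "2 * K \<le> a" "C \<le> (a - 2 * K + 1) ^ 2"
  shows "C ^ K \<le> fact a"
proof -
  have "C ^ K \<le> ((a - 2 * K + 1) ^ 2) ^ K" using assms(2) by (rule power_mono) simp
  also have "\<dots> = (a - 2 * K + 1) ^ (2 * K)" by (simp add: power_mult)
  also have "\<dots> \<le> (a - 2 * K + 1) ^ (2 * K) * fact (a - 2 * K)" by simp
  also have "\<dots> \<le> fact a"
    using power_mult_fact_le_fact_add[of "a - 2 * K" "2 * K"] assms(1) by simp
  finally show ?thesis .
qed

lemma no_close_triple_of_large_e_gcds:
  assumes large: "\<And>n. n \<in> {a, b, c} \<Longrightarrow> fact n < Suc n * e_gcd n ^ 2"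
    and ab: "a < b" and bc: "b < c" and ca: "c < a + L" and a_large: "33 * L + 13 \<le> a"
  shows False
proof -
  define C where "C = c + 1"
  define X where "X = e_gcd a * e_gcd b * e_gcd c"
  have "fact c \<le> fact a * c ^ (c - a)"
    using fact_add_le_mult_power[of a "c - a"] ab bc by simp
  also have "\<dots> \<le> fact a * C ^ L"
    unfolding C_def using ab bc ca by (intro mult_le_mono2 order.trans[OF power_mono power_increasing]) auto
  finally have "X \<le> fact a * C ^ L * C ^ (3 * L)"
    using e_gcd_prod_le[OF ab bc ca] unfolding X_def C_def by (meson le_trans mult_le_mono1)
  then have X_le: "X \<le> fact a * C ^ (4 * L)"
    by (simp add: mult.assoc flip: power_add)
  have "fact a * fact a * fact a \<le> (fact a * fact b * fact c :: nat)"
    using ab bc by (intro mult_le_mono fact_mono) auto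
  also have "\<dots> < (Suc a * e_gcd a ^ 2) * (Suc b * e_gcd b ^ 2) * (Suc c * e_gcd c ^ 2)"
    using large[of a] large[of b] large[of c] by (intro mult_strict_mono) auto
  also have "\<dots> = (Suc a * Suc b * Suc c) * X ^ 2"
    unfolding X_def by (simp add: algebra_simps power2_eq_square)
  also have "\<dots> \<le> (C * C * C) * (fact a * C ^ (4 * L)) ^ 2"
    using ab bc X_le unfolding C_def by (intro mult_le_mono power_mono) auto
  also have "\<dots> = fact a * (fact a * C ^ (8 * L + 3))"
  proof -
    have "C ^ (8 * L + 3) = C ^ (4 * L) * C ^ (4 * L) * (C * C * C)"
      by (simp only: power_add[symmetric] power3_eq_cube[symmetric]) simp
    then show ?thesis by (simp add: power2_eq_square mult_ac)
  qed
  finally have "fact a < C ^ (8 * L + 3)" by simp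
  moreover have "C ^ (8 * L + 3) \<le> fact a"
  proof (rule power_le_fact)
    define m where "m = a - 2 * (8 * L + 3)"
    have "17 * L + 7 \<le> m" unfolding m_def using a_large by simp
    then have "C \<le> m + 1 + (m + 1)" unfolding m_def C_def using ca by simp
    also have "\<dots> \<le> (m + 1) ^ 2" using \<open>17 * L + 7 \<le> m\<close> by (simp add: power2_eq_square)
    finally show "C \<le> (a - 2 * (8 * L + 3) + 1) ^ 2" unfolding m_def .
  qed (use a_large in simp)
  ultimately show False by simp
qed

section \<open>Density\<close>

lemma card_le_2_if_no_increasing_triple:
  fixes A :: "'a :: linorder set"
  assumes "finite A" and no_triple: "\<And>a b c. a \<in> A \<Longrightarrow> b \<in> A \<Longrightarrow> c \<in> A \<Longrightarrow> a < b \<Longrightarrow> b < c \<Longrightarrow> False"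
  shows "card A \<le> 2"
proof (rule ccontr)
  assume "\<not> card A \<le> 2"
  then have "A \<noteq> {}" by auto
  have "card A - card {Min A, Max A} \<le> card (A - {Min A, Max A})"
    by (rule diff_card_le_card_Diff) simp
  moreover have "card {Min A, Max A} \<le> 2" by (simp add: card_insert_le_m1)
  ultimately have "0 < card (A - {Min A, Max A})"
    using \<open>\<not> card A \<le> 2\<close> by linarith
  then have "A - {Min A, Max A} \<noteq> {}" by (simp add: card_gt_0_iff)
  then obtain b where b: "b \<in> A" "b \<noteq> Min A" "b \<noteq> Max A" by blast
  show False
    using no_triple[of "Min A" b "Max A"] b assms(1) \<open>A \<noteq> {}\<close>
    by (simp add: order.not_eq_order_implies_strict)
qed

lemma card_below_le_if_windows_sparse:
  fixes S :: "nat set"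
  assumes "0 < L" and window: "\<And>a. a0 \<le> a \<Longrightarrow> card (S \<inter> {a..<a + L}) \<le> k"
  shows "card {n. n < N \<and> n \<in> S} \<le> a0 + k * (N div L + 1)"
proof -
  define W where "W j = S \<inter> {a0 + j * L ..< a0 + j * L + L}" for j
  have "{n. n < N \<and> n \<in> S} \<subseteq> {..<a0} \<union> (\<Union>j<N div L + 1. W j)"
  proof
    fix n assume n: "n \<in> {n. n < N \<and> n \<in> S}"
    show "n \<in> {..<a0} \<union> (\<Union>j<N div L + 1. W j)"
    proof (cases "n < a0")
      case False
      define j where "j = (n - a0) div L"
      have "n - a0 = j * L + (n - a0) mod L" unfolding j_def by simp
      moreover have "(n - a0) mod L < L" using assms(1) by simp
      ultimately have "n \<in> {a0 + j * L ..< a0 + j * L + L}" using False by auto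
      moreover have "j \<le> N div L" unfolding j_def using n by (intro div_le_mono) auto
      ultimately show ?thesis using n unfolding W_def by auto
    qed simp
  qed
  then have "card {n. n < N \<and> n \<in> S} \<le> card ({..<a0} \<union> (\<Union>j<N div L + 1. W j))"
    by (intro card_mono) (simp_all add: W_def)
  also have "\<dots> \<le> card {..<a0} + card (\<Union>j<N div L + 1. W j)"
    by (rule card_Un_le)
  also have "card (\<Union>j<N div L + 1. W j) \<le> (\<Sum>j<N div L + 1. card (W j))"
    by (rule card_UN_le) simp
  also have "(\<Sum>j<N div L + 1. card (W j)) \<le> (\<Sum>j<N div L + 1. k)"
    unfolding W_def by (intro sum_mono window) simp
  finally show ?thesis by (simp add: mult.commute)
qed

lemma density_zero_if_windows_sparse:
  fixes S :: "nat set"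
  assumes "\<And>L. 0 < L \<Longrightarrow> \<exists>a0. \<forall>a\<ge>a0. card (S \<inter> {a..<a + L}) \<le> k"
  shows "(\<lambda>N. real (card {n. n < N \<and> n \<in> S}) / real N) \<longlonglongrightarrow> 0"
proof (rule LIMSEQ_I)
  fix r :: real
  assume "0 < r"
  obtain L :: nat where L: "2 * k / r < L" using reals_Archimedean2 by blast
  moreover have "0 \<le> 2 * k / r" using \<open>0 < r\<close> by simp
  ultimately have "0 < L" by linarith
  then obtain a0 where a0: "\<And>a. a0 \<le> a \<Longrightarrow> card (S \<inter> {a..<a + L}) \<le> k"
    using assms by blast
  obtain N0 :: nat where N0: "2 * (a0 + k) / r < N0" using reals_Archimedean2 by blast
  have "real (card {n. n < N \<and> n \<in> S}) / real N < r" if "N0 \<le> N" for N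
  proof -
    have N: "2 * (a0 + k) / r < N" using N0 that by linarith
    moreover have "0 \<le> 2 * (a0 + k) / r" using \<open>0 < r\<close> by simp
    ultimately have "0 < real N" by linarith
    have "card {n. n < N \<and> n \<in> S} \<le> a0 + k * (N div L + 1)"
      by (rule card_below_le_if_windows_sparse[OF \<open>0 < L\<close> a0])
    then have "real (card {n. n < N \<and> n \<in> S}) \<le> (a0 + k) + k * real (N div L)"
      by (simp add: algebra_simps flip: of_nat_mult of_nat_add)
    also have "real (N div L) \<le> N / L"
      using \<open>0 < L\<close> by (simp add: le_divide_eq flip: of_nat_mult)
    finally have "real (card {n. n < N \<and> n \<in> S}) \<le> (a0 + k) + k * (N / L)"
      by (simp add: mult_left_mono)
    then have "real (card {n. n < N \<and> n \<in> S}) / real N \<le> (a0 + k) / N + k / L"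
      using \<open>0 < real N\<close> \<open>0 < L\<close> by (simp add: field_simps)
    also have "\<dots> < r / 2 + r / 2"
      using N L \<open>0 < r\<close> \<open>0 < real N\<close> \<open>0 < L\<close>
      by (intro add_strict_mono) (simp_all add: field_simps)
    finally show ?thesis by simp
  qed
  then show "\<exists>N0. \<forall>N\<ge>N0. norm (real (card {n. n < N \<and> n \<in> S}) / real N - 0) < r"
    by auto
qed

theorem corollary3p3:
  shows "(\<lambda>N. real (card {n. n < N \<and>
            (\<Sum>r\<le>n. 1 / fact r :: real) \<in> range (cf_convergent (exp 1))}) / real N)
         \<longlonglongrightarrow> 0"
proof -
  define S where "S = {n. (\<Sum>r\<le>n. 1 / fact r :: real) \<in> range (cf_convergent (exp 1))}"
  have "\<exists>a0. \<forall>a\<ge>a0. card (S \<inter> {a..<a + L}) \<le> 2" if "0 < L" for L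
  proof (intro exI allI impI)
    fix a
    assume "33 * L + 13 \<le> a"
    show "card (S \<inter> {a..<a + L}) \<le> 2"
    proof (rule card_le_2_if_no_increasing_triple)
      fix x y z
      assume "x \<in> S \<inter> {a..<a + L}" "y \<in> S \<inter> {a..<a + L}" "z \<in> S \<inter> {a..<a + L}" "x < y" "y < z"
      then show False
        using \<open>33 * L + 13 \<le> a\<close> partial_sum_convergent_imp_fact_less
        by (intro no_close_triple_of_large_e_gcds[of x y z L]) (auto simp: S_def)
    qed simp
  qed
  then have "(\<lambda>N. real (card {n. n < N \<and> n \<in> S}) / real N) \<longlonglongrightarrow> 0"
    by (rule density_zero_if_windows_sparse)
  then show ?thesis unfolding S_def by simp
qed

end
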